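(* Suppose there exist $r_0>0$ and $C>0$ with $C<\mu/(\epsilon^2\lambda)$ such that $|\nabla\ln T(\mathbf{x})|<C$ for all $|\mathbf{x}|>r_0$, and put $\tilde C=(\mu-\epsilon^2\lambda C)/(\epsilon^2\lambda)>0$. Then there exists $r_1>r_0$ such that $$\mathcal{G}_{\mathbf u}|\mathbf{x}|\le-\frac{\epsilon^2\tilde C}{2}<0\qquad\text{for all }\mathbf{x}\in\mathbb{R}^3\setminus N\text{ with }|\mathbf{x}|>r_1.$$
   Context: Standing setting: fix $\mu>0$, $\lambda>0$, $e\in(0,1)$, $\epsilon\in(0,1]$. For $\mathbf{x}=(x,y,z)\in\mathbb{R}^3$ let $\nu(\mathbf{x})=\frac{\mu}{\lambda^2}\big(|\mathbf{x}|-\frac{x}{e}-\frac{\mathrm{i}y\sqrt{1-e^2}}{e}\big)$, $\sqrt{\cdot}$ the principal branch of the complex square root, $N=\{0\}\cup\{\mathbf{x}:y=0,\ \nu(\mathbf{x})\in[0,4]\}$ (Lebesgue-null), and on $\mathbb{R}^3\setminus N$ $$R_\epsilon(\mathbf{x})=\frac{\lambda}{\epsilon^2}\Big[\ln|\nu|+2\ln\big|1+\sqrt{1-4/\nu}\big|-\frac{\mu|\mathbf{x}|}{\lambda^2}+\tfrac12\operatorname{Re}\big(\nu(1-\sqrt{1-4/\nu})\big)\Big].$$ Let $T\in C^2(\mathbb{R}^3;(0,\infty))$ with $\ln T$ bounded. Set $\rho_\epsilon=T\exp(2R_\epsilon)$, the osmotic velocity $\mathbf{u}=\frac{\epsilon^2}{2}\nabla\ln\rho_\epsilon$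 and $\mathcal{G}_{\mathbf u}=\frac{\epsilon^2}{2}\Delta+\mathbf{u}\cdot\nabla$. *)

theory Defs
  imports "HOL-Analysis.Analysis"
begin

text \<open>Points of R^3 are vectors of type real^3; coordinates (x,y,z) = (v$1, v$2, v$3).\<close>

definition partial :: "3 \<Rightarrow> (real^3 \<Rightarrow> real) \<Rightarrow> real^3 \<Rightarrow> real" where
  "partial i f v = deriv (\<lambda>t. f (v + t *\<^sub>R axis i 1)) 0"

definition grad :: "(real^3 \<Rightarrow> real) \<Rightarrow> real^3 \<Rightarrow> real^3" where
  "grad f v = (\<chi> i. partial i f v)"

definition laplacian :: "(real^3 \<Rightarrow> real) \<Rightarrow> real^3 \<Rightarrow> real" where
  "laplacian f v = (\<Sum>i\<in>UNIV. partial i (partial i f) v)"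

definition C2 :: "(real^3 \<Rightarrow> real) \<Rightarrow> bool" where
  "C2 f \<longleftrightarrow> continuous_on UNIV f \<and>
     (\<forall>i v. ((\<lambda>t. f (v + t *\<^sub>R axis i 1)) has_real_derivative partial i f v) (at 0)) \<and>
     (\<forall>i. continuous_on UNIV (partial i f)) \<and>
     (\<forall>i j v. ((\<lambda>t. partial i f (v + t *\<^sub>R axis j 1)) has_real_derivative partial j (partial i f) v) (at 0)) \<and>
     (\<forall>i j. continuous_on UNIV (partial j (partial i f)))"

definition nu :: "real \<Rightarrow> real \<Rightarrow> real \<Rightarrow> real^3 \<Rightarrow> complex" where
  "nu \<mu> lam e v = complex_of_real (\<mu> / lam\<^sup>2) *
     (complex_of_real (norm v) - complex_of_real (v$1 / e)
      - \<i> * complex_of_real (v$2 * sqrt (1 - e\<^sup>2) / e))"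

definition Nset :: "real \<Rightarrow> real \<Rightarrow> real \<Rightarrow> (real^3) set" where
  "Nset \<mu> lam e = {0} \<union> {v. v$2 = 0 \<and> (\<exists>s\<in>{0..4}. nu \<mu> lam e v = complex_of_real s)}"

definition Reps :: "real \<Rightarrow> real \<Rightarrow> real \<Rightarrow> real \<Rightarrow> real^3 \<Rightarrow> real" where
  "Reps \<mu> lam e \<epsilon> v = (let n = nu \<mu> lam e v in
     lam / \<epsilon>\<^sup>2 * (ln (cmod n) + 2 * ln (cmod (1 + csqrt (1 - 4 / n)))
       - \<mu> * norm v / lam\<^sup>2 + Re (n * (1 - csqrt (1 - 4 / n))) / 2))"

definition rho :: "real \<Rightarrow> real \<Rightarrow> real \<Rightarrow> real \<Rightarrow> (real^3 \<Rightarrow> real) \<Rightarrow> real^3 \<Rightarrow> real" where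
  "rho \<mu> lam e \<epsilon> T v = T v * exp (2 * Reps \<mu> lam e \<epsilon> v)"

definition osm_vel :: "real \<Rightarrow> real \<Rightarrow> real \<Rightarrow> real \<Rightarrow> (real^3 \<Rightarrow> real) \<Rightarrow> real^3 \<Rightarrow> real^3" where
  "osm_vel \<mu> lam e \<epsilon> T v = (\<epsilon>\<^sup>2 / 2) *\<^sub>R grad (\<lambda>w. ln (rho \<mu> lam e \<epsilon> T w)) v"

definition gen :: "real \<Rightarrow> (real^3 \<Rightarrow> real^3) \<Rightarrow> (real^3 \<Rightarrow> real) \<Rightarrow> real^3 \<Rightarrow> real" where
  "gen \<epsilon> u f v = (\<epsilon>\<^sup>2 / 2) * laplacian f v + u v \<bullet> grad f v"

end

theory Submission
  imports Defs
begin

(*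
  For x off the exceptional set N and r = |x| we have Laplacian |x| = 2/r and grad |x| = x/r,
  so  G_u |x| = eps^2/r + (u(x) . x)/r.  Since ln rho = ln T + 2 R, only the radial
  derivatives x . grad ln T and x . grad R enter.  The radial derivative of R is computed
  exactly: R(x) = (lam/eps^2) (ln|nu| - mu|x|/lam^2 + Re Phi(nu)) with the holomorphic profile
  Phi(z) = 2 Ln(1 + sqrt(1 - 4/z)) + z (1 - sqrt(1 - 4/z))/2, nu is homogeneous of degree one,
  and Phi'(z) = (2/(1 + sqrt(1 - 4/z)) - 1)/z, giving
      eps^2 x . grad R = lam Re(2/(1 + sqrt(1 - 4/nu))) - mu r/lam.
  The real part is at most 2, and |x . grad ln T| <= C r by Cauchy-Schwarz, so
      G_u |x| <= (eps^2 + 2 lam)/r + eps^2 C/2 - mu/lam,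
  which is below -mu/(2 lam) + eps^2 C/2 = -eps^2 C~/2 once r is large.
*)

lemma partial_eqI:
  "((\<lambda>t. f (v + t *\<^sub>R axis i 1)) has_real_derivative D) (at 0) \<Longrightarrow> partial i f v = D"
  unfolding partial_def by (rule DERIV_imp_deriv)

lemma has_derivative_along_line:
  assumes "(f has_derivative f') (at v)"
  shows "((\<lambda>t::real. f (v + t *\<^sub>R h)) has_real_derivative f' h) (at 0)"
proof -
  have lin: "linear f'" using assms has_derivative_linear by blast
  have "((\<lambda>t::real. v + t *\<^sub>R h) has_derivative (\<lambda>t. t *\<^sub>R h)) (at 0)"
    by (auto intro!: derivative_eq_intros)
  from has_derivative_compose[OF this] assms
  have "((\<lambda>t. f (v + t *\<^sub>R h)) has_derivative (\<lambda>t. f' (t *\<^sub>R h))) (at 0)" by simp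
  moreover have "(\<lambda>t. f' (t *\<^sub>R h)) = (*) (f' h)"
    using linear_scale[OF lin] by (auto simp: mult.commute)
  ultimately show ?thesis by (simp add: has_field_derivative_def)
qed

lemma partial_eq_frechet:
  assumes "(f has_derivative f') (at v)"
  shows "partial i f v = f' (axis i 1)"
  using partial_eqI has_derivative_along_line[OF assms] by blast

lemma grad_inner_eq_frechet:
  assumes "(f has_derivative f') (at (v::real^3))"
  shows "grad f v \<bullet> w = f' w"
proof -
  have lin: "linear f'" using assms has_derivative_linear by blast
  have "f' w = f' (\<Sum>i\<in>UNIV. (w$i) *\<^sub>R axis i 1)"
    using basis_expansion[of w] by (simp add: scalar_mult_eq_scaleR)
  also have "\<dots> = (\<Sum>i\<in>UNIV. w$i * f' (axis i 1))"
    by (simp add: linear_sum[OF lin] linear_scale[OF lin])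
  finally show ?thesis
    by (simp add: grad_def inner_vec_def partial_eq_frechet[OF assms] mult.commute)
qed

lemma grad_add_scaled:
  assumes f: "\<And>i. ((\<lambda>t. f (v + t *\<^sub>R axis i 1)) has_real_derivative partial i f v) (at 0)"
    and g: "(g has_derivative g') (at v)"
  shows "grad (\<lambda>w. f w + c * g w) v = grad f v + c *\<^sub>R grad g v"
proof -
  have "partial i (\<lambda>w. f w + c * g w) v = partial i f v + c * partial i g v" for i
  proof (rule partial_eqI)
    show "((\<lambda>t. f (v + t *\<^sub>R axis i 1) + c * g (v + t *\<^sub>R axis i 1)) has_real_derivative
        partial i f v + c * partial i g v) (at 0)"
      using DERIV_add[OF f DERIV_cmult[OF has_derivative_along_line[OF g]]]
      by (simp add: partial_eq_frechet[OF g])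
  qed
  then show ?thesis by (simp add: grad_def vec_eq_iff)
qed

lemma partial_ln_has_derivative:
  assumes pos: "T v > 0"
    and T: "((\<lambda>t. T (v + t *\<^sub>R axis i 1)) has_real_derivative partial i T v) (at 0)"
  shows "((\<lambda>t. ln (T (v + t *\<^sub>R axis i 1))) has_real_derivative partial i (\<lambda>w. ln (T w)) v) (at 0)"
proof -
  have "((\<lambda>t. ln (T (v + t *\<^sub>R axis i 1))) has_real_derivative inverse (T v) * partial i T v) (at 0)"
    using DERIV_chain2[OF DERIV_ln[of "T (v + 0 *\<^sub>R axis i 1)"] T] pos by simp
  moreover from this have "partial i (\<lambda>w. ln (T w)) v = inverse (T v) * partial i T v"
    by (rule partial_eqI)
  ultimately show ?thesis by simp
qed

lemma norm_has_derivative_nonzero: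
  "(v::real^3) \<noteq> 0 \<Longrightarrow> (norm has_derivative (\<lambda>h. h \<bullet> v / norm v)) (at v)"
  using has_derivative_norm[of v] by (simp add: sgn_div_norm inner_commute divide_inverse_commute)

lemma partial_norm: "(v::real^3) \<noteq> 0 \<Longrightarrow> partial i norm v = v$i / norm v"
  using partial_eq_frechet[OF norm_has_derivative_nonzero]
  by (simp add: inner_axis inner_commute[of "axis i 1"])

lemma grad_norm: "(v::real^3) \<noteq> 0 \<Longrightarrow> grad norm v = (1 / norm v) *\<^sub>R v"
  by (simp add: grad_def vec_eq_iff partial_norm)

lemma laplacian_norm:
  assumes v: "(v::real^3) \<noteq> 0"
  shows "laplacian norm v = 2 / norm v"
proof -
  have second: "partial i (partial i norm) v = 1 / norm v - (v$i)\<^sup>2 / norm v ^ 3" for i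
  proof -
    define g where "g = (\<lambda>w::real^3. w$i / norm w)"
    have g: "(g has_derivative
        (\<lambda>h. - (v$i) * (inverse (norm v) * (h \<bullet> v / norm v) * inverse (norm v)) + h$i / norm v)) (at v)"
      unfolding g_def
      by (rule has_derivative_divide[OF bounded_linear_imp_has_derivative[OF bounded_linear_vec_nth]
            norm_has_derivative_nonzero[OF v]]) (use v in simp)
    have "((\<lambda>t::real. v + t *\<^sub>R axis i 1) \<longlongrightarrow> v + 0 *\<^sub>R axis i 1) (nhds 0)"
      by (intro tendsto_intros filterlim_ident)
    then have "((\<lambda>t::real. v + t *\<^sub>R axis i 1) \<longlongrightarrow> v) (nhds 0)" by simp
    from tendsto_imp_eventually_ne[OF this v]
    have near: "\<forall>\<^sub>F t in nhds 0. partial i norm (v + t *\<^sub>R axis i 1) = g (v + t *\<^sub>R axis i 1)"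
      by eventually_elim (simp add: partial_norm g_def)
    have "((\<lambda>t. partial i norm (v + t *\<^sub>R axis i 1)) has_real_derivative
        - (v$i) * (inverse (norm v) * (axis i 1 \<bullet> v / norm v) * inverse (norm v)) + (axis i 1::real^3)$i / norm v) (at 0)"
      using DERIV_cong_ev[OF refl near refl] has_derivative_along_line[OF g, of "axis i 1"] by blast
    then have "partial i (partial i norm) v
        = - (v$i) * (inverse (norm v) * (axis i 1 \<bullet> v / norm v) * inverse (norm v)) + (axis i 1::real^3)$i / norm v"
      by (rule partial_eqI)
    also have "\<dots> = 1 / norm v - (v$i)\<^sup>2 / norm v ^ 3"
      by (simp add: inner_axis' field_simps power2_eq_square power3_eq_cube)
    finally show ?thesis .
  qed
  have "(\<Sum>i\<in>UNIV. (v$i)\<^sup>2) = norm v ^ 2"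
    unfolding power2_norm_eq_inner by (simp add: inner_vec_def power2_eq_square)
  then have "laplacian norm v = 3 / norm v - norm v ^ 2 / norm v ^ 3"
    by (simp add: laplacian_def second sum_subtractf sum_divide_distrib[symmetric])
  also have "\<dots> = 2 / norm v" using v by (simp add: field_simps power2_eq_square power3_eq_cube)
  finally show ?thesis .
qed

lemma gen_norm:
  assumes "(v::real^3) \<noteq> 0"
  shows "gen \<epsilon> u norm v = \<epsilon>\<^sup>2 / norm v + (u v \<bullet> v) / norm v"
  using assms by (simp add: gen_def laplacian_norm grad_norm)

text \<open>The principal square root has nonnegative real part, so 1 + sqrt z stays away from the
  closed negative real axis.\<close>
lemma Re_one_plus_csqrt: "Re (1 + csqrt z) \<ge> 1"
  using Re_csqrt[of z] by simp

lemma one_plus_csqrt_not_nonpos: "1 + csqrt z \<notin> \<real>\<^sub>\<le>\<^sub>0"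
  using Re_one_plus_csqrt[of z] complex_nonpos_Reals_iff not_one_le_zero order_trans by metis

lemma one_plus_csqrt_nonzero: "1 + csqrt z \<noteq> 0"
  using Re_one_plus_csqrt[of z] by (metis zero_complex.simps(1) not_one_le_zero)

lemma Re_two_div_one_plus_csqrt_le: "Re (2 / (1 + csqrt z)) \<le> 2"
proof -
  have "cmod (1 + csqrt z) \<ge> 1"
    using Re_one_plus_csqrt[of z] complex_Re_le_cmod order_trans by blast
  then have "cmod (2 / (1 + csqrt z)) \<le> 2" by (simp add: norm_divide divide_le_eq)
  then show ?thesis using complex_Re_le_cmod order_trans by blast
qed

definition Phi :: "complex \<Rightarrow> complex" where
  "Phi z = 2 * Ln (1 + csqrt (1 - 4 / z)) + z * (1 - csqrt (1 - 4 / z)) / 2"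

lemma Reps_eq_Phi:
  "Reps \<mu> lam e \<epsilon> v = lam / \<epsilon>\<^sup>2 *
     (ln (cmod (nu \<mu> lam e v)) - \<mu> * norm v / lam\<^sup>2 + Re (Phi (nu \<mu> lam e v)))"
  by (simp add: Reps_def Phi_def Let_def Re_Ln one_plus_csqrt_nonzero algebra_simps)

lemma Phi_has_derivative:
  assumes z: "z \<noteq> 0" and w: "1 - 4 / z \<notin> \<real>\<^sub>\<le>\<^sub>0"
  shows "(Phi has_field_derivative (2 / (1 + csqrt (1 - 4 / z)) - 1) / z) (at z)"
proof -
  define s where "s = csqrt (1 - 4 / z)"
  have s0: "s \<noteq> 0" using w unfolding s_def by (auto simp: csqrt_eq_0)
  have s1: "1 + s \<noteq> 0" unfolding s_def by (rule one_plus_csqrt_nonzero)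
  have s2: "z * s\<^sup>2 = z - 4" using z unfolding s_def by (simp add: field_simps)
  have W: "((\<lambda>z. 1 - 4 / z) has_field_derivative 4 / z\<^sup>2) (at z)"
    using z by (auto intro!: derivative_eq_intros simp: power2_eq_square)
  have S: "((\<lambda>z. csqrt (1 - 4 / z)) has_field_derivative (4 / z\<^sup>2) / (2 * s)) (at z)"
    using has_field_derivative_csqrt'[OF W w] by (simp add: s_def)
  have L: "((\<lambda>z. Ln (1 + csqrt (1 - 4 / z))) has_field_derivative inverse (1 + s) * ((4 / z\<^sup>2) / (2 * s))) (at z)"
    using DERIV_chain2[OF has_field_derivative_Ln DERIV_add[OF DERIV_const S]]
      one_plus_csqrt_not_nonpos by (simp add: s_def)
  have P: "((\<lambda>z. z * (1 - csqrt (1 - 4 / z)) / 2) has_field_derivative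
      (1 * (1 - s) + (0 - (4 / z\<^sup>2) / (2 * s)) * z) / 2) (at z)"
    using DERIV_cdivide[OF DERIV_mult[OF DERIV_ident DERIV_diff[OF DERIV_const S]], where c=2]
    by (simp add: s_def)
  have "(Phi has_field_derivative
      2 * (inverse (1 + s) * ((4 / z\<^sup>2) / (2 * s))) + (1 * (1 - s) + (0 - (4 / z\<^sup>2) / (2 * s)) * z) / 2) (at z)"
    unfolding Phi_def[abs_def] by (rule DERIV_add[OF DERIV_cmult[OF L] P])
  moreover have "2 * (inverse (1 + s) * ((4 / z\<^sup>2) / (2 * s))) + (1 * (1 - s) + (0 - (4 / z\<^sup>2) / (2 * s)) * z) / 2
      = (2 / (1 + s) - 1) / z"
    using z s0 s1 s2 by (simp add: divide_simps power2_eq_square) algebra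
  ultimately show ?thesis by (simp add: s_def)
qed

lemma nu_scaleR: "c \<ge> 0 \<Longrightarrow> nu \<mu> lam e (c *\<^sub>R v) = complex_of_real c * nu \<mu> lam e v"
  unfolding nu_def by (simp add: algebra_simps)

lemma Im_nu_eq_0_iff:
  assumes "\<mu> > 0" "lam > 0" "0 < e" "e < 1"
  shows "Im (nu \<mu> lam e v) = 0 \<longleftrightarrow> v$2 = 0"
proof -
  have "sqrt (1 - e\<^sup>2) > 0" using assms by (simp add: power_less_one_iff)
  then show ?thesis using assms by (simp add: nu_def)
qed

text \<open>Off the exceptional set N the point is nonzero, nu does not vanish, and 1 - 4/nu avoids
  the branch cut of the square root: exactly the conditions under which R is smooth.\<close>
lemma not_in_Nset:
  assumes "\<mu> > 0" "lam > 0" "0 < e" "e < 1" "v \<notin> Nset \<mu> lam e"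
  shows "v \<noteq> 0" "nu \<mu> lam e v \<noteq> 0" "1 - 4 / nu \<mu> lam e v \<notin> \<real>\<^sub>\<le>\<^sub>0"
proof -
  have real_nu: "v \<in> Nset \<mu> lam e" if "nu \<mu> lam e v = complex_of_real a" "a \<in> {0..4}" for a
  proof -
    have "Im (nu \<mu> lam e v) = 0" using that(1) by simp
    then have "v$2 = 0" using Im_nu_eq_0_iff[OF assms(1-4)] by blast
    then show ?thesis using that unfolding Nset_def by blast
  qed
  show "v \<noteq> 0" using assms(5) unfolding Nset_def by auto
  show n0: "nu \<mu> lam e v \<noteq> 0" using real_nu[of 0] assms(5) by auto
  show "1 - 4 / nu \<mu> lam e v \<notin> \<real>\<^sub>\<le>\<^sub>0"
  proof
    assume "1 - 4 / nu \<mu> lam e v \<in> \<real>\<^sub>\<le>\<^sub>0"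
    then obtain a where a: "a \<le> 0" "1 - 4 / nu \<mu> lam e v = complex_of_real a"
      by (metis complex_nonpos_Reals_iff complex_of_real_def complex_surj)
    then have "nu \<mu> lam e v = complex_of_real (4 / (1 - a))"
      using n0 by (simp add: field_simps)
    moreover have "4 / (1 - a) \<in> {0..4}" using a(1) by (auto simp: field_simps)
    ultimately show False using real_nu assms(5) by blast
  qed
qed

lemma differentiable_of_real_comp:
  "f differentiable at v \<Longrightarrow> (\<lambda>w. complex_of_real (f w)) differentiable at v"
  by (rule differentiable_compose[OF of_real_differentiable])

lemma differentiable_vec_nth: "(\<lambda>w. w$i) differentiable F"
  by (rule bounded_linear_imp_differentiable) (rule bounded_linear_vec_nth)

lemma differentiable_Re_comp: "f differentiable at v \<Longrightarrow> (\<lambda>w. Re (f w)) differentiable at v"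
  by (rule differentiable_compose[OF bounded_linear_imp_differentiable[OF bounded_linear_Re]])

lemma differentiable_cmod_comp:
  "f differentiable at v \<Longrightarrow> f v \<noteq> 0 \<Longrightarrow> (\<lambda>w. cmod (f w)) differentiable at v"
  by (rule differentiable_compose[OF differentiable_norm_at])

lemma differentiable_ln_comp:
  fixes f :: "'a::real_normed_vector \<Rightarrow> real"
  assumes "f differentiable at v" "f v > 0"
  shows "(\<lambda>w. ln (f w)) differentiable at v"
proof -
  have "ln differentiable at (f v)"
    using DERIV_ln[OF assms(2)] field_differentiable_def field_differentiable_imp_differentiable by blast
  then show ?thesis using differentiable_compose[OF _ assms(1)] by blast
qed

lemma nu_differentiable:
  "(v::real^3) \<noteq> 0 \<Longrightarrow> e \<noteq> 0 \<Longrightarrow> lam \<noteq> 0 \<Longrightarrow> nu \<mu> lam e differentiable (at v)"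
  unfolding nu_def
  by (intro differentiable_mult differentiable_diff differentiable_const differentiable_of_real_comp
      differentiable_norm_at differentiable_divide differentiable_vec_nth) auto

lemma Reps_differentiable:
  assumes v: "(v::real^3) \<noteq> 0" and "e \<noteq> 0" "lam \<noteq> 0"
    and n0: "nu \<mu> lam e v \<noteq> 0" and w: "1 - 4 / nu \<mu> lam e v \<notin> \<real>\<^sub>\<le>\<^sub>0"
  shows "Reps \<mu> lam e \<epsilon> differentiable (at v)"
proof -
  have nu: "nu \<mu> lam e differentiable (at v)" using nu_differentiable assms by blast
  have "Phi differentiable (at (nu \<mu> lam e v))"
    using Phi_has_derivative[OF n0 w] field_differentiable_def field_differentiable_imp_differentiable
    by blast
  then have "(\<lambda>w. Phi (nu \<mu> lam e w)) differentiable (at v)"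
    using differentiable_compose[OF _ nu] by blast
  then show ?thesis
    unfolding Reps_eq_Phi[abs_def]
    by (intro differentiable_mult differentiable_diff differentiable_add differentiable_const
        differentiable_divide differentiable_norm_at differentiable_ln_comp differentiable_cmod_comp
        differentiable_Re_comp nu v n0) (use n0 assms(3) in auto)
qed

lemma has_real_derivative_Re_of_real:
  assumes "(f has_field_derivative D) (at (complex_of_real x))"
  shows "((\<lambda>t. Re (f (complex_of_real t))) has_real_derivative Re D) (at x)"
proof -
  have "(complex_of_real has_derivative complex_of_real) (at x)"
    by (rule bounded_linear.has_derivative[OF bounded_linear_of_real has_derivative_ident])
  from has_derivative_compose[OF this assms[unfolded has_field_derivative_def]]
  have "((\<lambda>t. f (complex_of_real t)) has_derivative (\<lambda>h. D * complex_of_real h)) (at x)" by simp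
  from bounded_linear.has_derivative[OF bounded_linear_Re this]
  have "((\<lambda>t. Re (f (complex_of_real t))) has_derivative (\<lambda>h. Re (D * complex_of_real h))) (at x)" .
  moreover have "(\<lambda>h. Re (D * complex_of_real h)) = (*) (Re D)" by (auto simp: mult.commute)
  ultimately show ?thesis by (simp add: has_field_derivative_def)
qed

lemma Reps_on_ray:
  assumes n0: "nu \<mu> lam e v \<noteq> 0" and t: "1 + t > 0"
  shows "Reps \<mu> lam e \<epsilon> (v + t *\<^sub>R v) = lam / \<epsilon>\<^sup>2 *
    (ln (1 + t) + ln (cmod (nu \<mu> lam e v)) - \<mu> * ((1 + t) * norm v) / lam\<^sup>2
     + Re (Phi ((1 + complex_of_real t) * nu \<mu> lam e v)))"
proof -
  have ray: "v + t *\<^sub>R v = (1 + t) *\<^sub>R v" by (simp add: algebra_simps)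
  have "cmod (1 + complex_of_real t) = 1 + t"
    using t by (metis abs_of_pos norm_of_real of_real_1 of_real_add)
  then have "ln (cmod ((1 + complex_of_real t) * nu \<mu> lam e v)) = ln (1 + t) + ln (cmod (nu \<mu> lam e v))"
    using t n0 by (simp add: norm_mult ln_mult)
  then show ?thesis
    unfolding Reps_eq_Phi ray nu_scaleR[OF less_imp_le[OF t]] using t by simp
qed

lemma Reps_radial_derivative:
  assumes n0: "nu \<mu> lam e v \<noteq> 0" and w: "1 - 4 / nu \<mu> lam e v \<notin> \<real>\<^sub>\<le>\<^sub>0"
  shows "((\<lambda>t. Reps \<mu> lam e \<epsilon> (v + t *\<^sub>R v)) has_real_derivative
     lam / \<epsilon>\<^sup>2 * (Re (2 / (1 + csqrt (1 - 4 / nu \<mu> lam e v))) - \<mu> * norm v / lam\<^sup>2)) (at 0)"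
proof -
  define n where "n = nu \<mu> lam e v"
  define r where "r = norm v"
  define D where "D = 2 / (1 + csqrt (1 - 4 / n)) - 1"
  have inner: "((\<lambda>\<tau>. (1 + \<tau>) * n) has_field_derivative n) (at 0)"
    by (auto intro!: derivative_eq_intros)
  have "(Phi has_field_derivative D / n) (at ((1 + 0) * n))"
    using Phi_has_derivative[OF n0 w] by (simp add: n_def D_def)
  from DERIV_chain2[OF this inner]
  have "((\<lambda>\<tau>. Phi ((1 + \<tau>) * n)) has_field_derivative D) (at (complex_of_real 0))"
    using n0 by (simp add: n_def)
  then have profile: "((\<lambda>t. Re (Phi ((1 + complex_of_real t) * n))) has_real_derivative Re D) (at 0)"
    by (rule has_real_derivative_Re_of_real)
  have along_ray: "((\<lambda>t. lam / \<epsilon>\<^sup>2 * (ln (1 + t) + ln (cmod n) - \<mu> * ((1 + t) * r) / lam\<^sup>2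
      + Re (Phi ((1 + complex_of_real t) * n)))) has_real_derivative
      lam / \<epsilon>\<^sup>2 * (1 + 0 - \<mu> * r / lam\<^sup>2 + Re D)) (at 0)"
  proof -
    have "((\<lambda>t::real. ln (1 + t)) has_real_derivative 1) (at 0)"
      by (auto intro!: derivative_eq_intros)
    moreover have "((\<lambda>t::real. \<mu> * ((1 + t) * r) / lam\<^sup>2) has_real_derivative \<mu> * r / lam\<^sup>2) (at 0)"
      by (rule DERIV_cdivide) (auto intro!: derivative_eq_intros)
    ultimately show ?thesis
      by (intro DERIV_cmult DERIV_add DERIV_diff DERIV_const profile)
  qed
  have near: "\<forall>\<^sub>F t in nhds 0. Reps \<mu> lam e \<epsilon> (v + t *\<^sub>R v) = lam / \<epsilon>\<^sup>2 * (ln (1 + t) + ln (cmod n)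
      - \<mu> * ((1 + t) * r) / lam\<^sup>2 + Re (Phi ((1 + complex_of_real t) * n)))"
  proof -
    have "\<forall>\<^sub>F t in nhds (0::real). t \<in> {-1<..}" by (rule eventually_nhds_in_open) auto
    then show ?thesis
      by eventually_elim (simp add: Reps_on_ray n0 n_def r_def)
  qed
  have "1 + 0 - \<mu> * r / lam\<^sup>2 + Re D = Re (2 / (1 + csqrt (1 - 4 / n))) - \<mu> * r / lam\<^sup>2"
    by (simp add: D_def)
  from along_ray[unfolded this] show ?thesis
    unfolding n_def[symmetric] r_def[symmetric] DERIV_cong_ev[OF refl near refl] .
qed

text \<open>Radial component of the osmotic velocity: since ln rho = ln T + 2R, it is the radial
  derivative of ln T (scaled by eps^2/2) plus the explicit radial derivative of R.\<close>
lemma osm_vel_radial: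
  assumes "\<mu> > 0" "lam > 0" "0 < e" "e < 1" "\<epsilon> \<noteq> 0"
    and T_pos: "\<forall>w. T w > 0"
    and T_partial: "\<And>i. ((\<lambda>t. T (v + t *\<^sub>R axis i 1)) has_real_derivative partial i T v) (at 0)"
    and vN: "v \<notin> Nset \<mu> lam e"
  shows "osm_vel \<mu> lam e \<epsilon> T v \<bullet> v = \<epsilon>\<^sup>2 / 2 * (grad (\<lambda>w. ln (T w)) v \<bullet> v)
     + lam * Re (2 / (1 + csqrt (1 - 4 / nu \<mu> lam e v))) - \<mu> * norm v / lam"
proof -
  note v = not_in_Nset[OF assms(1-4) vN]
  obtain R' where R': "(Reps \<mu> lam e \<epsilon> has_derivative R') (at v)"
    using Reps_differentiable[OF v(1) _ _ v(2,3)] assms(2,3) unfolding differentiable_def by force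
  have radial: "R' v = lam / \<epsilon>\<^sup>2 * (Re (2 / (1 + csqrt (1 - 4 / nu \<mu> lam e v))) - \<mu> * norm v / lam\<^sup>2)"
    using DERIV_unique[OF has_derivative_along_line[OF R', of v] Reps_radial_derivative[OF v(2,3)]] .
  have "(\<lambda>w. ln (rho \<mu> lam e \<epsilon> T w)) = (\<lambda>w. ln (T w) + 2 * Reps \<mu> lam e \<epsilon> w)"
  proof
    fix w
    have "T w > 0" using T_pos by blast
    then show "ln (rho \<mu> lam e \<epsilon> T w) = ln (T w) + 2 * Reps \<mu> lam e \<epsilon> w"
      by (simp add: rho_def ln_mult)
  qed
  then have "grad (\<lambda>w. ln (rho \<mu> lam e \<epsilon> T w)) v = grad (\<lambda>w. ln (T w)) v + 2 *\<^sub>R grad (Reps \<mu> lam e \<epsilon>) v"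
    using grad_add_scaled[OF partial_ln_has_derivative[OF _ T_partial] R'] T_pos by simp
  then have "osm_vel \<mu> lam e \<epsilon> T v \<bullet> v = \<epsilon>\<^sup>2 / 2 * (grad (\<lambda>w. ln (T w)) v \<bullet> v + 2 * R' v)"
    by (simp add: osm_vel_def inner_add_left grad_inner_eq_frechet[OF R'])
  moreover have "\<epsilon>\<^sup>2 * R' v = lam * Re (2 / (1 + csqrt (1 - 4 / nu \<mu> lam e v))) - \<mu> * norm v / lam"
  proof -
    have "\<epsilon>\<^sup>2 * R' v = lam * (Re (2 / (1 + csqrt (1 - 4 / nu \<mu> lam e v))) - \<mu> * norm v / lam\<^sup>2)"
      unfolding radial using assms(5) by simp
    also have "\<dots> = lam * Re (2 / (1 + csqrt (1 - 4 / nu \<mu> lam e v))) - \<mu> * norm v / lam"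
      using assms(2) by (simp add: right_diff_distrib power2_eq_square)
    finally show ?thesis .
  qed
  ultimately show ?thesis by (simp add: algebra_simps)
qed

text \<open>The elementary estimate behind the lemma, with G standing for x . grad ln T and X for
  Re(2/(1 + sqrt(1 - 4/nu))): for r beyond 2 lam (eps^2 + 2 lam)/mu the drift wins.\<close>
lemma drift_estimate:
  fixes r G X lam \<mu> \<epsilon> C :: real
  assumes r: "r > 0" and lam: "lam > 0" and mu: "\<mu> > 0"
    and G: "G \<le> C * r" and X: "X \<le> 2" and far: "2 * lam * (\<epsilon>\<^sup>2 + 2 * lam) / \<mu> \<le> r"
  shows "\<epsilon>\<^sup>2 / r + (\<epsilon>\<^sup>2 / 2 * G + lam * X - \<mu> * r / lam) / r \<le> - \<mu> / (2 * lam) + \<epsilon>\<^sup>2 * C / 2"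
proof -
  have "\<epsilon>\<^sup>2 / r + (\<epsilon>\<^sup>2 / 2 * G + lam * X - \<mu> * r / lam) / r
      = \<epsilon>\<^sup>2 / r + \<epsilon>\<^sup>2 * (G / r) / 2 + lam * X / r - \<mu> / lam"
    using r by (simp add: field_simps)
  also have "\<dots> \<le> (\<epsilon>\<^sup>2 + 2 * lam) / r + \<epsilon>\<^sup>2 * C / 2 - \<mu> / lam"
  proof -
    have "G / r \<le> C" using G r by (simp add: divide_le_eq)
    then have "\<epsilon>\<^sup>2 * (G / r) \<le> \<epsilon>\<^sup>2 * C" by (rule mult_left_mono) simp
    moreover have "lam * X / r \<le> 2 * lam / r" using X r lam by (simp add: divide_right_mono)
    moreover have "(\<epsilon>\<^sup>2 + 2 * lam) / r = \<epsilon>\<^sup>2 / r + 2 * lam / r" by (rule add_divide_distrib)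
    ultimately show ?thesis by argo
  qed
  also have "\<dots> \<le> - \<mu> / (2 * lam) + \<epsilon>\<^sup>2 * C / 2"
  proof -
    have "(\<epsilon>\<^sup>2 + 2 * lam) / r \<le> \<mu> / (2 * lam)"
      using far r lam mu by (simp add: field_simps)
    moreover have "\<mu> / lam = \<mu> / (2 * lam) + \<mu> / (2 * lam)" using lam by (simp add: field_simps)
    ultimately show ?thesis by linarith
  qed
  finally show ?thesis .
qed

theorem lemma7p3:
  fixes \<mu> lam e \<epsilon> r0 C :: real and T :: "real^3 \<Rightarrow> real"
  assumes "\<mu> > 0" "lam > 0" "0 < e" "e < 1" "0 < \<epsilon>" "\<epsilon> \<le> 1"
    and "C2 T" "\<forall>v. T v > 0" "\<exists>B. \<forall>v. \<bar>ln (T v)\<bar> \<le> B"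
    and "r0 > 0" "C > 0" "C < \<mu> / (\<epsilon>\<^sup>2 * lam)"
    and "\<forall>v. norm v > r0 \<longrightarrow> norm (grad (\<lambda>w. ln (T w)) v) < C"
  shows "\<exists>r1 > r0. \<forall>v. v \<notin> Nset \<mu> lam e \<and> norm v > r1 \<longrightarrow>
     gen \<epsilon> (osm_vel \<mu> lam e \<epsilon> T) norm v
       \<le> - (\<epsilon>\<^sup>2 * ((\<mu> - \<epsilon>\<^sup>2 * lam * C) / (\<epsilon>\<^sup>2 * lam)) / 2)
     \<and> - (\<epsilon>\<^sup>2 * ((\<mu> - \<epsilon>\<^sup>2 * lam * C) / (\<epsilon>\<^sup>2 * lam)) / 2) < 0"
proof -
  have mu: "\<mu> > 0" and lam: "lam > 0" and eps: "\<epsilon> > 0" using assms by auto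
  define r1 where "r1 = max r0 (2 * lam * (\<epsilon>\<^sup>2 + 2 * lam) / \<mu>) + 1"
  have bound_eq: "- (\<epsilon>\<^sup>2 * ((\<mu> - \<epsilon>\<^sup>2 * lam * C) / (\<epsilon>\<^sup>2 * lam)) / 2) = - \<mu> / (2 * lam) + \<epsilon>\<^sup>2 * C / 2"
    using eps lam by (simp add: field_simps)
  have bound_neg: "- \<mu> / (2 * lam) + \<epsilon>\<^sup>2 * C / 2 < 0"
    using assms(12) eps lam by (simp add: field_simps)
  have "gen \<epsilon> (osm_vel \<mu> lam e \<epsilon> T) norm v \<le> - \<mu> / (2 * lam) + \<epsilon>\<^sup>2 * C / 2"
    if vN: "v \<notin> Nset \<mu> lam e" and far: "norm v > r1" for v
  proof -
    have v0: "v \<noteq> 0" using not_in_Nset[OF assms(1-4) vN] by simp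
    have "norm (grad (\<lambda>w. ln (T w)) v) \<le> C"
      using assms(13) far by (simp add: r1_def less_imp_le)
    then have grad_lnT: "grad (\<lambda>w. ln (T w)) v \<bullet> v \<le> C * norm v"
      using norm_cauchy_schwarz[of "grad (\<lambda>w. ln (T w)) v" v] mult_right_mono[of _ C "norm v"]
      by fastforce
    have T_partial: "\<And>i. ((\<lambda>t. T (v + t *\<^sub>R axis i 1)) has_real_derivative partial i T v) (at 0)"
      using assms(7) unfolding C2_def by blast
    have "\<epsilon> \<noteq> 0" using eps by simp
    note radial = osm_vel_radial[OF assms(1-4) this assms(8) T_partial vN]
    show ?thesis
      unfolding gen_norm[OF v0] radial using v0 far
      by (intro drift_estimate mu lam grad_lnT Re_two_div_one_plus_csqrt_le) (auto simp: r1_def)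
  qed
  then show ?thesis
    unfolding bound_eq using bound_neg assms(10) by (auto intro!: exI[of _ r1] simp: r1_def)
qed

end
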